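(* Let $n\ge k\ge 2$ be positive integers and let $x_1,x_2,\ldots,x_k$ be positive integers with $\sum_{i=1}^k x_i=n$. Then $$n-1\le \sum_{i=1}^{k-1}x_ix_{i+1}\le \begin{cases}\lfloor n/2\rfloor\cdot\lceil n/2\rceil & \text{if } k=2,3,\\ ab+k-5 & \text{if } k\ge 4,\end{cases}$$ where $a=\lfloor (n-k+4)/2\rfloor$ and $b=\lceil (n-k+4)/2\rceil$. Moreover, for any such $n$ and $k$, both the lower bound and the upper bound are attained by some choice of positive integers $x_1,\ldots,x_k$ summing to $n$. *)

theory Defs
  imports Main
begin

text \<open>Sequences x_1..x_k are modelled as functions nat => nat, only indices 1..k matter.\<close>

definition adj_sum :: "nat \<Rightarrow> (nat \<Rightarrow> nat) \<Rightarrow> nat" where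
  "adj_sum k x = (\<Sum>i=1..k-1. x i * x (i+1))"

definition upper_bd :: "nat \<Rightarrow> nat \<Rightarrow> nat" where
  "upper_bd n k = (if k \<le> 3 then (n div 2) * ((n + 1) div 2)
     else ((n + 4 - k) div 2) * ((n + 4 - k + 1) div 2) + k - 5)"

end

theory Submission
  imports Defs
begin

(*
  Lower bound: for positive a, b one has a * b >= a + b - 1, so appending the parts one at a
  time keeps adj_sum >= (sum of the parts) - 1; the sequence (n - k + 1, 1, ..., 1) attains it.

  Upper bound: each product y_i * y_(i+1) pairs an even-indexed with an odd-indexed entry, so
  for any nonnegative sequence adj_sum <= E * O <= floor(s/2) * ceil(s/2), where E and O are
  the sums over even and odd indices and s = E + O.  For k <= 3 this is applied to x itself.
  For k >= 4 it is applied to y_i = x_i - 1, which sums to m = n - k; expanding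
  x_i * x_(i+1) = y_i * y_(i+1) + y_i + y_(i+1) + 1 gives
  adj_sum <= floor(m/2) * ceil(m/2) + 2m + k - 1 = a * b + k - 5.
  It is attained by (floor(n/2), ceil(n/2)) for k = 2, by (1, floor(n/2), ceil(n/2) - 1)
  for k = 3 and by (1, a - 1, b - 1, 1, ..., 1) for k >= 4.
*)

lemma div_half_add_half: "n div 2 + (n + 1) div 2 = (n::nat)"
  by simp

lemma mult_le_floor_ceil_half:
  fixes p q :: nat
  shows "p * q \<le> ((p + q) div 2) * ((p + q + 1) div 2)"
proof -
  have ordered: "p * q \<le> ((p + q) div 2) * ((p + q + 1) div 2)" if "p \<le> q" for p q :: nat
  proof -
    obtain d where q: "q = p + d" using \<open>p \<le> q\<close> le_Suc_ex by blast
    have "(p + q) div 2 = p + d div 2" "(p + q + 1) div 2 = p + (d + 1) div 2"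
      unfolding q by simp_all
    moreover have "p * q = p * p + p * (d div 2 + (d + 1) div 2)"
      unfolding q div_half_add_half by (simp add: algebra_simps)
    ultimately show ?thesis by (simp add: algebra_simps)
  qed
  show ?thesis
    using ordered[of p q] ordered[of q p] by (cases "p \<le> q") (simp_all add: ac_simps)
qed

lemma mult_eq_pred_pred_mult:
  fixes a b :: nat
  assumes "0 < a" and "0 < b"
  shows "a * b = (a - 1) * (b - 1) + ((a - 1) + (b - 1)) + 1"
  using assms by (cases a; cases b) simp_all

lemma adj_sum_Suc: "1 \<le> k \<Longrightarrow> adj_sum (Suc k) x = adj_sum k x + x k * x (Suc k)"
  by (cases k) (simp_all add: adj_sum_def)

lemma adj_sum_2: "adj_sum 2 x = x 1 * x 2"
  by (simp add: adj_sum_def eval_nat_numeral)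

lemma adj_sum_3: "adj_sum 3 x = x 1 * x 2 + x 2 * x 3"
  by (simp add: adj_sum_def eval_nat_numeral)

lemma adj_sum_4: "adj_sum 4 x = x 1 * x 2 + x 2 * x 3 + x 3 * x 4"
  by (simp add: adj_sum_def eval_nat_numeral)

lemma sum_ones_tail:
  fixes x :: "nat \<Rightarrow> nat"
  assumes "j \<le> k" and "\<forall>i>j. x i = 1"
  shows "(\<Sum>i=1..k. x i) = (\<Sum>i=1..j. x i) + (k - j)"
  using assms(1)
proof (induction k rule: dec_induct)
  case (step k)
  then show ?case using assms(2) by (simp add: Suc_diff_le)
qed simp

lemma adj_sum_ones_tail:
  assumes "1 \<le> j" and "j \<le> k" and "\<forall>i\<ge>j. x i = 1"
  shows "adj_sum k x = adj_sum j x + (k - j)"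
  using assms(2)
proof (induction k rule: dec_induct)
  case (step k)
  then show ?case using assms(1,3) by (simp add: adj_sum_Suc Suc_diff_le)
qed simp

lemma adj_sum_le_even_odd:
  "adj_sum k y \<le>
     (\<Sum>i=1..k. if even i then y i else 0) * (\<Sum>i=1..k. if odd i then y i else 0)"
proof (induction k)
  case 0
  show ?case by (simp add: adj_sum_def)
next
  case (Suc k)
  define Ev where "Ev = (\<Sum>i=1..k. if even i then y i else 0)"
  define Od where "Od = (\<Sum>i=1..k. if odd i then y i else 0)"
  show ?case
  proof (cases "k = 0")
    case True
    then show ?thesis by (simp add: adj_sum_def)
  next
    case False
    have "y k \<le> (if even k then Ev else Od)"
      using False member_le_sum[of k "{1..k}" "\<lambda>i. if even i then y i else 0"]
        member_le_sum[of k "{1..k}" "\<lambda>i. if odd i then y i else 0"]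
      unfolding Ev_def Od_def by auto
    then have step: "y k * y (Suc k) \<le> (if even k then Ev else Od) * y (Suc k)" by simp
    have "adj_sum (Suc k) y = adj_sum k y + y k * y (Suc k)"
      using False by (simp add: adj_sum_Suc)
    also have "\<dots> \<le> Ev * Od + (if even k then Ev else Od) * y (Suc k)"
      using Suc.IH step unfolding Ev_def Od_def by (rule add_mono)
    also have "\<dots> = (Ev + (if even (Suc k) then y (Suc k) else 0)) *
                     (Od + (if odd (Suc k) then y (Suc k) else 0))"
      by (simp add: algebra_simps)
    finally show ?thesis unfolding Ev_def Od_def by simp
  qed
qed

lemma adj_sum_le_floor_ceil_half:
  "adj_sum k y \<le> ((\<Sum>i=1..k. y i) div 2) * (((\<Sum>i=1..k. y i) + 1) div 2)"
proof -
  define Ev where "Ev = (\<Sum>i=1..k. if even i then y i else 0)"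
  define Od where "Od = (\<Sum>i=1..k. if odd i then y i else 0)"
  have total: "Ev + Od = (\<Sum>i=1..k. y i)"
    unfolding Ev_def Od_def by (simp only: sum.distrib[symmetric]) (rule sum.cong, auto)
  have "adj_sum k y \<le> Ev * Od"
    unfolding Ev_def Od_def by (rule adj_sum_le_even_odd)
  also have "\<dots> \<le> ((Ev + Od) div 2) * ((Ev + Od + 1) div 2)"
    by (rule mult_le_floor_ceil_half)
  finally show ?thesis unfolding total .
qed

lemma adj_sum_ge_sum_minus_one:
  assumes "2 \<le> k" and "\<forall>i\<in>{1..k}. 0 < x i"
  shows "(\<Sum>i=1..k. x i) - 1 \<le> adj_sum k x"
  using assms
proof (induction k rule: nat_induct_at_least)
  case base
  then have "x 1 * x 2 = (x 1 - 1) * (x 2 - 1) + ((x 1 - 1) + (x 2 - 1)) + 1"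
    by (intro mult_eq_pred_pred_mult) auto
  moreover have "(\<Sum>i=1..2. x i) = x 1 + x 2" by (simp add: eval_nat_numeral)
  ultimately show ?case by (simp add: adj_sum_2)
next
  case (Suc k)
  then have "\<forall>i\<in>{1..k}. 0 < x i" and "0 < x k" by auto
  then have "(\<Sum>i=1..k. x i) - 1 \<le> adj_sum k x" and "x (Suc k) \<le> x k * x (Suc k)"
    using Suc.IH by simp_all
  moreover have "adj_sum (Suc k) x = adj_sum k x + x k * x (Suc k)"
    using Suc.hyps by (simp add: adj_sum_Suc)
  moreover have "(\<Sum>i=1..Suc k. x i) = (\<Sum>i=1..k. x i) + x (Suc k)" by simp
  ultimately show ?case by linarith
qed

lemma adj_sum_pred_expand:
  assumes "\<forall>i\<in>{1..k}. 0 < x i"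
  shows "adj_sum k x =
    adj_sum k (\<lambda>i. x i - 1) + (\<Sum>i=1..k-1. (x i - 1) + (x (i+1) - 1)) + (k - 1)"
proof -
  have "adj_sum k x = (\<Sum>i=1..k-1. (x i - 1) * (x (i+1) - 1) + ((x i - 1) + (x (i+1) - 1)) + 1)"
    unfolding adj_sum_def using assms by (intro sum.cong refl mult_eq_pred_pred_mult) auto
  also have "\<dots> = adj_sum k (\<lambda>i. x i - 1) + (\<Sum>i=1..k-1. (x i - 1) + (x (i+1) - 1))
      + (\<Sum>i=1..k-1. 1)"
    unfolding adj_sum_def by (simp only: sum.distrib)
  finally show ?thesis by simp
qed

lemma sum_adjacent_pairs_le:
  fixes y :: "nat \<Rightarrow> nat"
  shows "(\<Sum>i=1..k-1. y i + y (i+1)) \<le> 2 * (\<Sum>i=1..k. y i)"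
proof -
  have "(\<Sum>i=1..k-1. y i) \<le> (\<Sum>i=1..k. y i)" by (intro sum_mono2) auto
  moreover have "(\<Sum>i=1..k-1. y (i+1)) = (\<Sum>i=2..Suc (k-1). y i)"
    using sum.shift_bounds_cl_Suc_ivl[of y 1 "k-1"] by (simp add: numeral_2_eq_2)
  moreover have "\<dots> \<le> (\<Sum>i=1..k. y i)" by (intro sum_mono2) auto
  ultimately show ?thesis by (simp add: sum.distrib)
qed

lemma upper_bd_eq:
  assumes "4 \<le> k" and "k \<le> n"
  shows "upper_bd n k = ((n - k) div 2) * ((n - k + 1) div 2) + 2 * (n - k) + k - 1"
proof -
  define m where "m = n - k"
  define a where "a = m div 2"
  define b where "b = (m + 1) div 2"
  have "n + 4 - k = m + 4" using assms unfolding m_def by simp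
  then have "upper_bd n k = ((m + 4) div 2) * ((m + 4 + 1) div 2) + k - 5"
    using assms unfolding upper_bd_def by simp
  moreover have "(m + 4) div 2 = a + 2" and "(m + 4 + 1) div 2 = b + 2"
    unfolding a_def b_def by simp_all
  ultimately have "upper_bd n k = (a + 2) * (b + 2) + k - 5" by simp
  moreover have "(a + 2) * (b + 2) = a * b + 2 * (a + b) + 4" by (simp add: algebra_simps)
  moreover have "a + b = m" unfolding a_def b_def by simp
  ultimately have "upper_bd n k = a * b + 2 * m + 4 + k - 5" by simp
  then show ?thesis using assms(1) unfolding m_def[symmetric] a_def[symmetric] b_def[symmetric]
    by simp
qed

definition composition :: "nat \<Rightarrow> nat \<Rightarrow> (nat \<Rightarrow> nat) \<Rightarrow> bool" where
  "composition n k x \<longleftrightarrow> (\<forall>i\<in>{1..k}. 0 < x i) \<and> (\<Sum>i=1..k. x i) = n"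

lemma composition_length_le:
  assumes "composition n k x"
  shows "k \<le> n"
proof -
  have "(\<Sum>i=1..k. 1) \<le> (\<Sum>i=1..k. x i)"
    using assms unfolding composition_def by (intro sum_mono) (simp add: Suc_le_eq)
  then show ?thesis using assms unfolding composition_def by simp
qed

lemma adj_sum_le_upper_bd:
  assumes "2 \<le> k" and "composition n k x"
  shows "adj_sum k x \<le> upper_bd n k"
proof (cases "k \<le> 3")
  case True
  then show ?thesis
    using adj_sum_le_floor_ceil_half[of k x] assms unfolding composition_def upper_bd_def by simp
next
  case False
  define y where "y i = x i - 1" for i
  have pos: "\<forall>i\<in>{1..k}. 0 < x i" using assms unfolding composition_def by simp
  have sum_y: "(\<Sum>i=1..k. y i) = n - k"
  proof -
    have "(\<Sum>i=1..k. x i - 1) = (\<Sum>i=1..k. x i) - (\<Sum>i=1..k. 1)"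
      using pos by (intro sum_subtractf_nat) (simp add: Suc_le_eq)
    then show ?thesis using assms(2) unfolding y_def composition_def by simp
  qed
  have "adj_sum k x = adj_sum k y + (\<Sum>i=1..k-1. y i + y (i+1)) + (k - 1)"
    using adj_sum_pred_expand[OF pos] unfolding y_def by simp
  also have "\<dots> \<le> ((n - k) div 2) * ((n - k + 1) div 2) + 2 * (n - k) + (k - 1)"
    using adj_sum_le_floor_ceil_half[of k y] sum_adjacent_pairs_le[of y k]
    unfolding sum_y by (intro add_mono) simp_all
  also have "\<dots> = upper_bd n k"
    using upper_bd_eq[of k n] False composition_length_le[OF assms(2)] assms(1) by simp
  finally show ?thesis .
qed

lemma exists_composition_adj_sum_eq_pred:
  assumes "2 \<le> k" and "k \<le> n"
  shows "\<exists>x. composition n k x \<and> adj_sum k x = n - 1"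
proof -
  define x where "x i = (if i = 1 then n - k + 1 else 1)" for i :: nat
  have "(\<Sum>i=1..k. x i) = n"
    using sum_ones_tail[of 1 k x] assms by (simp add: x_def)
  moreover have "adj_sum k x = n - 1"
    using adj_sum_ones_tail[of 2 k x] assms by (simp add: x_def adj_sum_2)
  moreover have "\<forall>i\<in>{1..k}. 0 < x i" by (simp add: x_def)
  ultimately show ?thesis unfolding composition_def by blast
qed

lemma exists_composition_adj_sum_eq_upper_bd:
  assumes "2 \<le> k" and "k \<le> n"
  shows "\<exists>x. composition n k x \<and> adj_sum k x = upper_bd n k"
proof -
  consider "k = 2" | "k = 3" | "4 \<le> k" using assms(1) by linarith
  then show ?thesis
  proof cases
    case 1
    define x where "x i = (if i = 1 then n div 2 else (n + 1) div 2)" for i :: nat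
    have "(\<Sum>i=1..2. x i) = x 1 + x 2" by (simp add: eval_nat_numeral)
    then have "composition n k x \<and> adj_sum k x = upper_bd n k"
      using assms 1 by (auto simp: composition_def x_def adj_sum_2 upper_bd_def)
    then show ?thesis by blast
  next
    case 2
    define x where "x i = (if i = 1 then 1 else if i = 2 then n div 2 else (n + 1) div 2 - 1)"
      for i :: nat
    have "(\<Sum>i=1..3. x i) = x 1 + x 2 + x 3" by (simp add: eval_nat_numeral)
    then have "composition n k x \<and> adj_sum k x = upper_bd n k"
      using assms 2 by (auto simp: composition_def x_def adj_sum_3 upper_bd_def algebra_simps)
    then show ?thesis by blast
  next
    case 3
    define a where "a = (n + 4 - k) div 2"
    define b where "b = (n + 4 - k + 1) div 2"
    have a2: "2 \<le> a" and b2: "2 \<le> b" and ab: "a + b = n + 4 - k"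
      using assms unfolding a_def b_def by simp_all
    define x where "x i = (if i = 2 then a - 1 else if i = 3 then b - 1 else 1)" for i :: nat
    have "(\<Sum>i=1..k. x i) = n"
      using sum_ones_tail[of 3 k x] 3 ab a2 b2 by (simp add: x_def eval_nat_numeral)
    moreover have "adj_sum k x = upper_bd n k"
    proof -
      have "adj_sum k x = (a - 1) + (a - 1) * (b - 1) + (b - 1) + (k - 4)"
        using adj_sum_ones_tail[of 4 k x] 3 by (simp add: x_def adj_sum_4)
      moreover have "upper_bd n k = a * b + k - 5"
        using 3 unfolding upper_bd_def a_def b_def by simp
      ultimately show ?thesis
        using mult_eq_pred_pred_mult[of a b] 3 a2 b2 by linarith
    qed
    moreover have "\<forall>i\<in>{1..k}. 0 < x i" using a2 b2 by (simp add: x_def)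
    ultimately show ?thesis unfolding composition_def by blast
  qed
qed

theorem lemma3:
  fixes n k :: nat
  assumes "2 \<le> k" and "k \<le> n"
  shows "(\<forall>x :: nat \<Rightarrow> nat. (\<forall>i\<in>{1..k}. 0 < x i) \<and> (\<Sum>i=1..k. x i) = n \<longrightarrow>
            n - 1 \<le> adj_sum k x \<and> adj_sum k x \<le> upper_bd n k)
       \<and> (\<exists>x :: nat \<Rightarrow> nat. (\<forall>i\<in>{1..k}. 0 < x i) \<and> (\<Sum>i=1..k. x i) = n \<and> adj_sum k x = n - 1)
       \<and> (\<exists>x :: nat \<Rightarrow> nat. (\<forall>i\<in>{1..k}. 0 < x i) \<and> (\<Sum>i=1..k. x i) = n \<and> adj_sum k x = upper_bd n k)"
proof (intro conjI allI impI)
  fix x :: "nat \<Rightarrow> nat"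
  assume x: "(\<forall>i\<in>{1..k}. 0 < x i) \<and> (\<Sum>i=1..k. x i) = n"
  then show "n - 1 \<le> adj_sum k x"
    using adj_sum_ge_sum_minus_one[OF assms(1), of x] by argo
  from x have "composition n k x" unfolding composition_def .
  then show "adj_sum k x \<le> upper_bd n k" by (rule adj_sum_le_upper_bd[OF assms(1)])
next
  show "\<exists>x. (\<forall>i\<in>{1..k}. 0 < x i) \<and> (\<Sum>i=1..k. x i) = n \<and> adj_sum k x = n - 1"
    using exists_composition_adj_sum_eq_pred[OF assms] unfolding composition_def conj_assoc .
next
  show "\<exists>x. (\<forall>i\<in>{1..k}. 0 < x i) \<and> (\<Sum>i=1..k. x i) = n \<and> adj_sum k x = upper_bd n k"
    using exists_composition_adj_sum_eq_upper_bd[OF assms] unfolding composition_def conj_assoc .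
qed

end
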